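(* Let $n\ge 1$, let $\vec u=(u_1,\dots,u_n)\in\{-1,1\}^n$, and let $H_c(\vec u)=\sigma_1^{u_1}\cdots\sigma_n^{u_n}+\sigma_1^{-u_1}\cdots\sigma_n^{-u_n}$ acting on $n$ qubits. Let $v_i=(1+u_i)/2\in\{0,1\}$ and $\bar v_i=(1-u_i)/2=1-v_i$, and define $$|x^{\pm}\rangle=\frac{|v_1\cdots v_n\rangle\pm|\bar v_1\cdots\bar v_n\rangle}{\sqrt2}.$$ Let $G$ be any $n$-qubit unitary with $G|x^+\rangle=|0\,1\cdots1\rangle$ and $G|x^-\rangle=|1\,1\cdots1\rangle$ (first qubit in state $0$, resp. $1$, all other qubits in state $1$). For $\theta\in\mathbb{R}$ let $P(\theta)$ be the $n$-qubit multi-controlled phase gate, i.e. the diagonal unitary with $P(\theta)|1\cdots1\rangle=e^{i\theta}|1\cdots1\rangle$ and $P(\theta)|b\rangle=|b\rangle$ for every other computational basis state $|b\rangle$. Let $X_1$ denote the Pauli $X$ gate on the first qubit. Then for every $\beta\in\mathbb{R}$, $$e^{-i\beta H_c(\vec u)}=G^\dagger P(\beta)X_1P(-\beta)X_1G .$$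
   Context: Qubits are labelled $1,\dots,n$; $|b_1\cdots b_n\rangle$ denotes the computational basis state with qubit $i$ in state $b_i$. $\sigma_i^{u}$ denotes the single-qubit matrix $\sigma^{u}$ on qubit $i$ (tensored with identity elsewhere), where $\sigma^{+1}=\begin{pmatrix}0&0\\1&0\end{pmatrix}$ and $\sigma^{-1}=\begin{pmatrix}0&1\\0&0\end{pmatrix}$ in the basis $|0\rangle,|1\rangle$. In the paper, $\vec u$ arises as a solution of $C\vec u=\vec 0$ for a constraint matrix $C$, restricted to the qubits on which it is nonzero. *)

theory Defs
  imports Complex_Main "Jordan_Normal_Form.Matrix"
begin

text \<open>A computational
basis state |b_1 ... b_n> (b : nat => nat, b i in {0,1} for i in {1..n}) has index
sum_i b_i 2^(n-i), i.e. qubit 1 is the most significant bit.\<close>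

definition qbit :: "nat \<Rightarrow> nat \<Rightarrow> nat \<Rightarrow> nat" where
  "qbit n a i = (a div 2 ^ (n - i)) mod 2"

definition basis_index :: "nat \<Rightarrow> (nat \<Rightarrow> nat) \<Rightarrow> nat" where
  "basis_index n b = (\<Sum>i=1..n. b i * 2 ^ (n - i))"

definition ket :: "nat \<Rightarrow> (nat \<Rightarrow> nat) \<Rightarrow> complex vec" where
  "ket n b = unit_vec (2 ^ n) (basis_index n b)"

text \<open>Single-qubit 2x2 matrix M acting on qubit i, tensored with identity elsewhere.\<close>
definition on_qubit :: "nat \<Rightarrow> nat \<Rightarrow> complex mat \<Rightarrow> complex mat" where
  "on_qubit n i M = mat (2 ^ n) (2 ^ n) (\<lambda>(a, b).
     if (\<forall>j\<in>{1..n}. j \<noteq> i \<longrightarrow> qbit n a j = qbit n b j)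
     then M $$ (qbit n a i, qbit n b i) else 0)"

definition sigma :: "int \<Rightarrow> complex mat" where
  "sigma u = (if u = 1 then mat_of_rows_list 2 [[0, 0], [1, 0]]
              else mat_of_rows_list 2 [[0, 1], [0, 0]])"

definition pauliX :: "complex mat" where
  "pauliX = mat_of_rows_list 2 [[0, 1], [1, 0]]"

definition mprod :: "nat \<Rightarrow> (nat \<Rightarrow> complex mat) \<Rightarrow> complex mat" where
  "mprod n F = foldr (\<lambda>A B. A * B) (map F [1..<n+1]) (1\<^sub>m (2 ^ n))"

definition Hc :: "nat \<Rightarrow> (nat \<Rightarrow> int) \<Rightarrow> complex mat" where
  "Hc n u = mprod n (\<lambda>i. on_qubit n i (sigma (u i)))
          + mprod n (\<lambda>i. on_qubit n i (sigma (- u i)))"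

definition mexp :: "complex mat \<Rightarrow> complex mat" where
  "mexp A = mat (dim_row A) (dim_col A)
     (\<lambda>(i, j). \<Sum>k. (A ^\<^sub>m k) $$ (i, j) / of_nat (fact k))"

definition dagger :: "complex mat \<Rightarrow> complex mat" where
  "dagger A = mat (dim_col A) (dim_row A) (\<lambda>(i, j). cnj (A $$ (j, i)))"

definition unitary :: "nat \<Rightarrow> complex mat \<Rightarrow> bool" where
  "unitary N G \<longleftrightarrow> G \<in> carrier_mat N N \<and> dagger G * G = 1\<^sub>m N \<and> G * dagger G = 1\<^sub>m N"

definition phase_gate :: "nat \<Rightarrow> real \<Rightarrow> complex mat" where
  "phase_gate n \<theta> = mat (2 ^ n) (2 ^ n) (\<lambda>(a, b).
     if a = b then (if a = basis_index n (\<lambda>_. 1) then exp (\<i> * of_real \<theta>) else 1) else 0)"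

end

theory Submission
  imports Defs
begin

(* With p and q the indices of |v> and |v_bar>, H_c(u) = |p><q| + |q><p| = X+ - X-, where
   X+ and X- are the projectors onto |x+> and |x->.  Because G maps |x+> and |x-> to the basis
   states r = |01...1> and s = |1...1>, X+ = dagger G |r><r| G and X- = dagger G |s><s| G are
   orthogonal idempotents, so exp (c (X+ - X-)) = 1 + (e^c - 1) X+ + (e^-c - 1) X- is the
   conjugate by G of the diagonal matrix 1 + (e^c - 1) |r><r| + (e^-c - 1) |s><s|.  For
   c = -i beta this diagonal matrix is P(beta) X_1 P(-beta) X_1: conjugating P(-beta) by the
   bit flip X_1 moves its phase from s to the flipped state X_1 s = r. *)

section \<open>Computational basis indices\<close>

lemma basis_index_Suc: "basis_index (Suc n) b = 2 * basis_index n b + b (Suc n)"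
proof -
  have "basis_index (Suc n) b = (\<Sum>i=1..n. b i * 2 ^ (Suc n - i)) + b (Suc n)"
    unfolding basis_index_def by (simp add: sum.atLeast1_atMost_eq)
  also have "(\<Sum>i=1..n. b i * 2 ^ (Suc n - i)) = 2 * basis_index n b"
    unfolding basis_index_def sum_distrib_left by (rule sum.cong) (auto simp: Suc_diff_le)
  finally show ?thesis by simp
qed

lemma qbit_less [simp]: "qbit n a j < 2"
  by (simp add: qbit_def)

lemma qbit_Suc: "j \<le> n \<Longrightarrow> qbit (Suc n) a j = qbit n (a div 2) j"
  by (simp add: qbit_def Suc_diff_le div_mult2_eq mult.commute)

lemma qbit_Suc_self: "qbit (Suc n) a (Suc n) = a mod 2"
  by (simp add: qbit_def)

lemma basis_index_cong: "(\<And>i. i \<in> {1..n} \<Longrightarrow> b i = c i) \<Longrightarrow> basis_index n b = basis_index n c"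
  unfolding basis_index_def by (rule sum.cong) auto

lemma basis_index_less: "\<forall>i\<in>{1..n}. b i < 2 \<Longrightarrow> basis_index n b < 2 ^ n"
proof (induction n)
  case (Suc n)
  then have "basis_index n b < 2 ^ n" "b (Suc n) < 2" by auto
  then show ?case by (simp add: basis_index_Suc)
qed (simp add: basis_index_def)

lemma qbit_basis_index:
  "\<forall>i\<in>{1..n}. b i < 2 \<Longrightarrow> j \<in> {1..n} \<Longrightarrow> qbit n (basis_index n b) j = b j"
proof (induction n)
  case (Suc n)
  then show ?case
    by (cases "j = Suc n") (auto simp: basis_index_Suc qbit_Suc_self qbit_Suc)
qed simp

lemma basis_index_qbit: "a < 2 ^ n \<Longrightarrow> basis_index n (qbit n a) = a"
proof (induction n arbitrary: a)
  case (Suc n)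
  have "basis_index n (qbit (Suc n) a) = basis_index n (qbit n (a div 2))"
    by (rule basis_index_cong) (simp add: qbit_Suc)
  also have "\<dots> = a div 2"
    using Suc by (intro Suc.IH) (simp add: less_mult_imp_div_less mult.commute)
  finally show ?case by (simp add: basis_index_Suc qbit_Suc_self)
qed (simp add: basis_index_def)

lemma eq_basis_index_iff:
  assumes "\<forall>i\<in>{1..n}. b i < 2" and "a < 2 ^ n"
  shows "a = basis_index n b \<longleftrightarrow> (\<forall>j\<in>{1..n}. qbit n a j = b j)"
  using assms basis_index_qbit[of a n] basis_index_cong[of n "qbit n a" b] qbit_basis_index[of n b]
  by auto

lemma qbit_eqI:
  "a < 2 ^ n \<Longrightarrow> c < 2 ^ n \<Longrightarrow> (\<And>j. j \<in> {1..n} \<Longrightarrow> qbit n a j = qbit n c j) \<Longrightarrow> a = c"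
  by (metis basis_index_cong basis_index_qbit)

definition set_qbit :: "nat \<Rightarrow> nat \<Rightarrow> nat \<Rightarrow> nat \<Rightarrow> nat" where
  "set_qbit n a i y = basis_index n (\<lambda>j. if j = i then y else qbit n a j)"

lemma set_qbit_less: "y < 2 \<Longrightarrow> set_qbit n a i y < 2 ^ n"
  unfolding set_qbit_def by (rule basis_index_less) auto

lemma eq_set_qbit_iff: "y < 2 \<Longrightarrow> c < 2 ^ n \<Longrightarrow>
  c = set_qbit n a i y \<longleftrightarrow> (\<forall>j\<in>{1..n}. qbit n c j = (if j = i then y else qbit n a j))"
  unfolding set_qbit_def by (rule eq_basis_index_iff) auto

lemma qbit_set_qbit:
  "y < 2 \<Longrightarrow> j \<in> {1..n} \<Longrightarrow> qbit n (set_qbit n a i y) j = (if j = i then y else qbit n a j)"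
  using eq_set_qbit_iff[OF _ set_qbit_less] by blast

definition flip_qbit :: "nat \<Rightarrow> nat \<Rightarrow> nat \<Rightarrow> nat" where
  "flip_qbit n i a = set_qbit n a i (1 - qbit n a i)"

lemma flip_qbit_less: "flip_qbit n i a < 2 ^ n"
  by (simp add: flip_qbit_def set_qbit_less)

lemma qbit_flip_qbit:
  "j \<in> {1..n} \<Longrightarrow> qbit n (flip_qbit n i a) j = (if j = i then 1 - qbit n a i else qbit n a j)"
  by (simp add: flip_qbit_def qbit_set_qbit)

lemma flip_qbit_neq:
  assumes "i \<in> {1..n}"
  shows "flip_qbit n i a \<noteq> a"
proof -
  have "1 - qbit n a i \<noteq> qbit n a i"
    using qbit_less[of n a i] by arith
  then show ?thesis
    using qbit_flip_qbit[OF assms, of i a] by auto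
qed

lemma flip_qbit_flip_qbit:
  assumes "i \<in> {1..n}" and "a < 2 ^ n"
  shows "flip_qbit n i (flip_qbit n i a) = a"
proof (rule qbit_eqI[OF flip_qbit_less \<open>a < 2 ^ n\<close>])
  have "1 - (1 - qbit n a i) = qbit n a i"
    using qbit_less[of n a i] by arith
  then show "qbit n (flip_qbit n i (flip_qbit n i a)) j = qbit n a j" if "j \<in> {1..n}" for j
    using that assms(1) by (simp add: qbit_flip_qbit)
qed

section \<open>Matrix units and operators on a single qubit\<close>

lemma index_mult_mat_sum:
  assumes "A \<in> carrier_mat nr n" and "B \<in> carrier_mat n nc" and "i < nr" and "j < nc"
  shows "(A * B) $$ (i, j) = (\<Sum>c<n. A $$ (i, c) * B $$ (c, j))"
proof -
  have "dim_row A = nr" "dim_col A = n" "dim_row B = n" "dim_col B = nc"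
    using assms(1,2) by auto
  then show ?thesis
    using assms(3,4) by (simp add: scalar_prod_def atLeast0LessThan)
qed

definition mat_unit :: "nat \<Rightarrow> nat \<Rightarrow> nat \<Rightarrow> 'a :: {zero, one} mat" where
  "mat_unit N i j = mat N N (\<lambda>(a, b). if a = i \<and> b = j then 1 else 0)"

lemma mat_unit_carrier [simp]: "mat_unit N i j \<in> carrier_mat N N"
  by (simp add: mat_unit_def)

lemma mat_unit_dim: "dim_row (mat_unit N i j) = N" "dim_col (mat_unit N i j) = N"
  by (simp_all add: mat_unit_def)

lemma index_mat_unit [simp]:
  "a < N \<Longrightarrow> b < N \<Longrightarrow> mat_unit N i j $$ (a, b) = (if a = i \<and> b = j then 1 else 0)"
  by (simp add: mat_unit_def)

lemma on_qubit_dim [simp]: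
  "dim_row (on_qubit n i M) = 2 ^ n" "dim_col (on_qubit n i M) = 2 ^ n"
  by (simp_all add: on_qubit_def)

lemma on_qubit_carrier [simp]: "on_qubit n i M \<in> carrier_mat (2 ^ n) (2 ^ n)"
  by (simp add: carrier_matI)

lemma index_on_qubit:
  assumes "i \<in> {1..n}" and "a < 2 ^ n" and "c < 2 ^ n"
  shows "on_qubit n i M $$ (a, c) = (\<Sum>y<2. if c = set_qbit n a i y then M $$ (qbit n a i, y) else 0)"
proof -
  let ?agree = "\<forall>j\<in>{1..n}. j \<noteq> i \<longrightarrow> qbit n a j = qbit n c j"
  have entry: "on_qubit n i M $$ (a, c) = (if ?agree then M $$ (qbit n a i, qbit n c i) else 0)"
    using assms(2,3) by (simp add: on_qubit_def)
  have set_iff: "c = set_qbit n a i y \<longleftrightarrow> ?agree \<and> y = qbit n c i" if "y < 2" for y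
    using eq_set_qbit_iff[OF that assms(3)] assms(1) by auto
  show ?thesis
  proof (cases ?agree)
    case True
    have "(\<Sum>y<2. if c = set_qbit n a i y then M $$ (qbit n a i, y) else 0)
        = (\<Sum>y<2. if y = qbit n c i then M $$ (qbit n a i, y) else 0)"
      using set_iff True by (intro sum.cong) auto
    then show ?thesis
      using True by (simp add: entry)
  next
    case False
    then have "c \<noteq> set_qbit n a i y" if "y < 2" for y
      using set_iff[OF that] by blast
    then show ?thesis
      unfolding entry if_not_P[OF False] by simp
  qed
qed

lemma index_on_qubit_mult:
  assumes "i \<in> {1..n}" and "a < 2 ^ n" and "B \<in> carrier_mat (2 ^ n) m" and "b < m"
  shows "(on_qubit n i M * B) $$ (a, b) = (\<Sum>y<2. M $$ (qbit n a i, y) * B $$ (set_qbit n a i y, b))"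
proof -
  have "(on_qubit n i M * B) $$ (a, b) = (\<Sum>c<2 ^ n. on_qubit n i M $$ (a, c) * B $$ (c, b))"
    using assms by (intro index_mult_mat_sum) auto
  also have "\<dots> = (\<Sum>c<2 ^ n. \<Sum>y<2.
      if c = set_qbit n a i y then M $$ (qbit n a i, y) * B $$ (c, b) else 0)"
    using assms
    by (intro sum.cong refl) (simp add: index_on_qubit sum_distrib_right, intro sum.cong refl, simp)
  also have "\<dots> = (\<Sum>y<2. \<Sum>c<2 ^ n.
      if c = set_qbit n a i y then M $$ (qbit n a i, y) * B $$ (c, b) else 0)"
    by (rule sum.swap)
  also have "\<dots> = (\<Sum>y<2. M $$ (qbit n a i, y) * B $$ (set_qbit n a i y, b))"
    by (rule sum.cong[OF refl]) (simp add: sum.delta set_qbit_less)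
  finally show ?thesis .
qed

lemma index_on_qubit_mat_unit_mult:
  assumes "i \<in> {1..n}" and "a < 2 ^ n" and "B \<in> carrier_mat (2 ^ n) m" and "b < m"
    and "x < 2" and "y < 2"
  shows "(on_qubit n i (mat_unit 2 x y) * B) $$ (a, b)
    = (if qbit n a i = x then B $$ (set_qbit n a i y, b) else 0)"
  unfolding index_on_qubit_mult[OF assms(1-4)]
  using assms(5,6) qbit_less[of n a i] by (auto simp: numeral_2_eq_2 less_Suc_eq)

lemma index_pauliX: "x < 2 \<Longrightarrow> y < 2 \<Longrightarrow> pauliX $$ (x, y) = (if x = y then 0 else 1)"
  by (auto simp: pauliX_def mat_of_rows_list_def numeral_2_eq_2 less_Suc_eq)

lemma index_on_qubit_pauliX:
  assumes "i \<in> {1..n}" and "a < 2 ^ n" and "c < 2 ^ n"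
  shows "on_qubit n i pauliX $$ (a, c) = (if c = flip_qbit n i a then 1 else 0)"
  using assms qbit_less[of n a i]
  by (auto simp: index_on_qubit index_pauliX flip_qbit_def numeral_2_eq_2 less_Suc_eq)

lemma index_mult_on_qubit_pauliX:
  assumes "B \<in> carrier_mat m (2 ^ n)" and "i \<in> {1..n}" and "a < m" and "b < 2 ^ n"
  shows "(B * on_qubit n i pauliX) $$ (a, b) = B $$ (a, flip_qbit n i b)"
proof -
  have flip_iff: "b = flip_qbit n i c \<longleftrightarrow> c = flip_qbit n i b" if "c < 2 ^ n" for c
    using flip_qbit_flip_qbit[OF assms(2)] that assms(4) by auto
  have "(B * on_qubit n i pauliX) $$ (a, b) = (\<Sum>c<2 ^ n. B $$ (a, c) * on_qubit n i pauliX $$ (c, b))"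
    using assms by (intro index_mult_mat_sum) auto
  also have "\<dots> = (\<Sum>c<2 ^ n. if c = flip_qbit n i b then B $$ (a, c) else 0)"
    using assms flip_iff by (intro sum.cong refl) (simp add: index_on_qubit_pauliX)
  also have "\<dots> = B $$ (a, flip_qbit n i b)"
    by (simp add: flip_qbit_less)
  finally show ?thesis .
qed

lemma on_qubit_mat_unit_suffix_prod:
  fixes w w' :: "nat \<Rightarrow> nat"
  assumes w: "\<forall>j\<in>{1..n}. w j < 2" and w': "\<forall>j\<in>{1..n}. w' j < 2"
  shows "k \<le> n + 1 \<Longrightarrow> 1 \<le> k \<Longrightarrow>
    foldr (*) (map (\<lambda>j. on_qubit n j (mat_unit 2 (w j) (w' j))) [k..<n+1]) (1\<^sub>m (2 ^ n))
    = mat (2 ^ n) (2 ^ n) (\<lambda>(a, b). if \<forall>j\<in>{1..n}.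
        if j < k then qbit n a j = qbit n b j else qbit n a j = w j \<and> qbit n b j = w' j
      then 1 else 0)"
proof (induction k rule: inc_induct)
  case base
  show ?case
    by (rule eq_matI) (auto intro: qbit_eqI)
next
  case (step k)
  define T where
    "T k = foldr (*) (map (\<lambda>j. on_qubit n j (mat_unit 2 (w j) (w' j))) [k..<n+1]) (1\<^sub>m (2 ^ n))" for k
  define cond where "cond k a b \<longleftrightarrow> (\<forall>j\<in>{1..n}.
        if j < k then qbit n a j = qbit n b j else qbit n a j = w j \<and> qbit n b j = w' j)" for k a b
  have k: "k \<in> {1..n}"
    using step by simp
  have IH: "T (Suc k) = mat (2 ^ n) (2 ^ n) (\<lambda>(a, b). if cond (Suc k) a b then 1 else 0)"
    using step.IH unfolding T_def cond_def by simp
  have Tk: "T k = on_qubit n k (mat_unit 2 (w k) (w' k)) * T (Suc k)"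
    using step.hyps unfolding T_def by (simp del: upt_Suc add: upt_conv_Cons)
  have cond_step: "cond k a b \<longleftrightarrow> qbit n a k = w k \<and> cond (Suc k) (set_qbit n a k (w' k)) b" for a b
    using k w' by (auto simp: cond_def qbit_set_qbit less_Suc_eq)
  have "T k = mat (2 ^ n) (2 ^ n) (\<lambda>(a, b). if cond k a b then 1 else 0)" (is "_ = ?R")
  proof (rule eq_matI)
    fix a b assume "a < dim_row ?R" and "b < dim_col ?R"
    then have "a < 2 ^ n" "b < 2 ^ n" by simp_all
    then show "T k $$ (a, b) = ?R $$ (a, b)"
      using k w w' index_on_qubit_mat_unit_mult[of k n a "T (Suc k)" "2 ^ n" b "w k" "w' k"]
      by (simp add: Tk IH set_qbit_less cond_step)
  qed (simp_all add: Tk IH)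
  then show ?case
    unfolding T_def cond_def .
qed

section \<open>The Hamiltonian as a sum of matrix units\<close>

lemma mprod_cong:
  assumes "\<And>i. i \<in> {1..n} \<Longrightarrow> F i = F' i"
  shows "mprod n F = mprod n F'"
proof -
  have "map F [1..<n+1] = map F' [1..<n+1]"
    using assms by (intro map_cong) auto
  then show ?thesis
    by (simp only: mprod_def)
qed

lemma mprod_on_qubit_mat_unit:
  assumes w: "\<forall>j\<in>{1..n}. w j < 2" and w': "\<forall>j\<in>{1..n}. w' j < 2"
  shows "mprod n (\<lambda>j. on_qubit n j (mat_unit 2 (w j) (w' j)))
    = mat_unit (2 ^ n) (basis_index n w) (basis_index n w')"
proof -
  have "mprod n (\<lambda>j. on_qubit n j (mat_unit 2 (w j) (w' j)))
    = mat (2 ^ n) (2 ^ n) (\<lambda>(a, b). if \<forall>j\<in>{1..n}. qbit n a j = w j \<and> qbit n b j = w' j then 1 else 0)"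
    using on_qubit_mat_unit_suffix_prod[OF w w', of 1] by (simp add: mprod_def)
  then show ?thesis
    using eq_basis_index_iff[OF w] eq_basis_index_iff[OF w'] by (auto simp: mat_unit_def)
qed

lemma sigma_eq_mat_unit:
  assumes "u = 1 \<or> u = -1"
  shows "sigma u = mat_unit 2 (nat ((1 + u) div 2)) (nat ((1 - u) div 2))" (is "_ = ?R")
proof (rule eq_matI)
  fix a b assume "a < dim_row ?R" and "b < dim_col ?R"
  then have "a \<in> {0, 1}" "b \<in> {0, 1}"
    by (auto simp: mat_unit_def)
  with assms show "sigma u $$ (a, b) = ?R $$ (a, b)"
    by (auto simp: sigma_def mat_of_rows_list_def mat_unit_def)
qed (use assms in \<open>auto simp: sigma_def mat_of_rows_list_def mat_unit_def\<close>)

lemma Hc_eq_mat_unit: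
  assumes "\<forall>i\<in>{1..n}. u i = 1 \<or> u i = -1"
  defines "p \<equiv> basis_index n (\<lambda>i. nat ((1 + u i) div 2))"
    and "q \<equiv> basis_index n (\<lambda>i. nat ((1 - u i) div 2))"
  shows "Hc n u = mat_unit (2 ^ n) p q + mat_unit (2 ^ n) q p"
proof -
  have bits: "\<forall>i\<in>{1..n}. nat ((1 + u i) div 2) < 2" "\<forall>i\<in>{1..n}. nat ((1 - u i) div 2) < 2"
    using assms(1) by auto
  have "mprod n (\<lambda>i. on_qubit n i (sigma (u i)))
      = mprod n (\<lambda>i. on_qubit n i (mat_unit 2 (nat ((1 + u i) div 2)) (nat ((1 - u i) div 2))))"
    using assms(1) by (intro mprod_cong) (simp add: sigma_eq_mat_unit)
  moreover have "sigma (- u i) = mat_unit 2 (nat ((1 - u i) div 2)) (nat ((1 + u i) div 2))"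
    if "i \<in> {1..n}" for i
    using sigma_eq_mat_unit[of "- u i"] assms(1) that by (cases "u i = 1") auto
  then have "mprod n (\<lambda>i. on_qubit n i (sigma (- u i)))
      = mprod n (\<lambda>i. on_qubit n i (mat_unit 2 (nat ((1 - u i) div 2)) (nat ((1 + u i) div 2))))"
    by (intro mprod_cong) simp
  ultimately show ?thesis
    unfolding Hc_def p_def q_def
    by (simp add: mprod_on_qubit_mat_unit[OF bits(1) bits(2)] mprod_on_qubit_mat_unit[OF bits(2) bits(1)])
qed

section \<open>Unitary conjugation\<close>

lemma index_mult_mat_unit:
  fixes A :: "'a :: semiring_1 mat"
  assumes "A \<in> carrier_mat m N" and "r < N" and "a < m" and "c < N"
  shows "(A * mat_unit N r s) $$ (a, c) = (if c = s then A $$ (a, r) else 0)"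
proof -
  have "(A * mat_unit N r s) $$ (a, c) = (\<Sum>l<N. A $$ (a, l) * mat_unit N r s $$ (l, c))"
    by (rule index_mult_mat_sum[OF assms(1) mat_unit_carrier assms(3,4)])
  also have "\<dots> = (\<Sum>l<N. if l = r then (if c = s then A $$ (a, l) else 0) else 0)"
    using assms(4) by (intro sum.cong) auto
  finally show ?thesis
    using assms(2) by simp
qed

lemma index_mult_mat_unit_mult:
  fixes A B :: "'a :: semiring_1 mat"
  assumes "A \<in> carrier_mat m N" and "B \<in> carrier_mat N k" and "r < N" and "s < N"
    and "a < m" and "b < k"
  shows "(A * mat_unit N r s * B) $$ (a, b) = A $$ (a, r) * B $$ (s, b)"
proof -
  have "(A * mat_unit N r s * B) $$ (a, b) = (\<Sum>c<N. (A * mat_unit N r s) $$ (a, c) * B $$ (c, b))"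
    using assms by (intro index_mult_mat_sum) auto
  also have "\<dots> = (\<Sum>c<N. if c = s then A $$ (a, r) * B $$ (c, b) else 0)"
    using assms by (intro sum.cong) (auto simp: index_mult_mat_unit)
  finally show ?thesis
    using assms(4) by simp
qed

lemma mat_unit_mult_mat_unit:
  assumes "i < N" and "k < N"
  shows "mat_unit N i j * mat_unit N k l
    = (if j = k then mat_unit N i l else (0\<^sub>m N N :: 'a :: semiring_1 mat))" (is "?L = ?R")
proof (rule eq_matI)
  fix a b assume "a < dim_row ?R" and "b < dim_col ?R"
  then have a: "a < N" and b: "b < N"
    by (auto simp: mat_unit_dim split: if_splits)
  have "?L $$ (a, b) = (if b = l then mat_unit N i j $$ (a, k) else 0)"
    by (rule index_mult_mat_unit[OF mat_unit_carrier assms(2) a b])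
  then show "?L $$ (a, b) = ?R $$ (a, b)"
    using assms a b by auto
qed (simp_all add: mat_unit_dim)

lemma index_mult_mat_vec_unit_vec:
  fixes A :: "'a :: semiring_1 mat"
  assumes "A \<in> carrier_mat m N" and "i < m" and "r < N"
  shows "(A *\<^sub>v unit_vec N r) $ i = A $$ (i, r)"
proof -
  have "(A *\<^sub>v unit_vec N r) $ i = (\<Sum>l<N. A $$ (i, l) * unit_vec N r $ l)"
    using assms by (auto simp: scalar_prod_def atLeast0LessThan)
  also have "\<dots> = (\<Sum>l<N. if l = r then A $$ (i, l) else 0)"
    using assms(3) by (intro sum.cong) auto
  finally show ?thesis
    using assms(3) by simp
qed

definition outer_prod :: "complex vec \<Rightarrow> complex vec \<Rightarrow> complex mat" where
  "outer_prod x y = mat (dim_vec x) (dim_vec y) (\<lambda>(i, j). x $ i * cnj (y $ j))"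

lemma dagger_dim [simp]: "dim_row (dagger A) = dim_col A" "dim_col (dagger A) = dim_row A"
  by (simp_all add: dagger_def)

lemma index_dagger [simp]: "i < dim_col A \<Longrightarrow> j < dim_row A \<Longrightarrow> dagger A $$ (i, j) = cnj (A $$ (j, i))"
  by (simp add: dagger_def)

lemma unitaryD:
  assumes "unitary N G"
  shows "G \<in> carrier_mat N N" and "dagger G \<in> carrier_mat N N"
    and "dagger G * G = 1\<^sub>m N" and "G * dagger G = 1\<^sub>m N"
proof -
  show G: "G \<in> carrier_mat N N" "dagger G * G = 1\<^sub>m N" "G * dagger G = 1\<^sub>m N"
    using assms by (simp_all add: unitary_def)
  show "dagger G \<in> carrier_mat N N"
    using G(1) by (intro carrier_matI) auto
qed

lemma unitary_dagger_mult_vec: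
  assumes "unitary N G" and "x \<in> carrier_vec N" and "G *\<^sub>v x = y"
  shows "dagger G *\<^sub>v y = x"
proof -
  note G = unitaryD[OF assms(1)]
  have "dagger G *\<^sub>v y = dagger G *\<^sub>v (G *\<^sub>v x)"
    using assms(3) by simp
  also have "\<dots> = (dagger G * G) *\<^sub>v x"
    by (rule assoc_mult_mat_vec[OF G(2) G(1) assms(2), symmetric])
  also have "\<dots> = x"
    using G(3) assms(2) by simp
  finally show ?thesis .
qed

lemma unitary_conj_mat_unit:
  assumes G: "unitary N G" and x: "x \<in> carrier_vec N" and r: "r < N" and Gx: "G *\<^sub>v x = unit_vec N r"
  shows "dagger G * mat_unit N r r * G = outer_prod x x"
proof -
  note G' = unitaryD[OF G]
  have dims: "dim_row G = N" "dim_col G = N" "dim_vec x = N"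
    using G'(1) x by auto
  have dagger_col: "dagger G $$ (i, r) = x $ i" if "i < N" for i
    using index_mult_mat_vec_unit_vec[OF G'(2) that r] unitary_dagger_mult_vec[OF G x Gx] by simp
  have G_row: "G $$ (r, j) = cnj (x $ j)" if "j < N" for j
    using dagger_col[OF that] that r dims by (metis complex_cnj_cnj index_dagger)
  show ?thesis
  proof (rule eq_matI)
    fix i j assume "i < dim_row (outer_prod x x)" and "j < dim_col (outer_prod x x)"
    then have i: "i < N" and j: "j < N"
      by (simp_all add: outer_prod_def dims)
    show "(dagger G * mat_unit N r r * G) $$ (i, j) = outer_prod x x $$ (i, j)"
      using i j dims by (simp add: index_mult_mat_unit_mult[OF G'(2) G'(1) r r i j] dagger_col G_row outer_prod_def)
  qed (simp_all add: outer_prod_def dims)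
qed

lemma outer_prod_plus_minus:
  assumes "p < N" and "q < N"
  defines "c \<equiv> complex_of_real (1 / sqrt 2)"
  shows "outer_prod (c \<cdot>\<^sub>v (unit_vec N p + unit_vec N q)) (c \<cdot>\<^sub>v (unit_vec N p + unit_vec N q))
       - outer_prod (c \<cdot>\<^sub>v (unit_vec N p - unit_vec N q)) (c \<cdot>\<^sub>v (unit_vec N p - unit_vec N q))
       = mat_unit N p q + mat_unit N q p" (is "?L = ?R")
proof -
  have "1 / sqrt 2 * (1 / sqrt 2) = (1 / 2 :: real)"
    by simp
  then have sq: "c * c = 1 / 2" and cnj: "cnj c = c"
    unfolding c_def of_real_mult[symmetric] by simp_all
  show ?thesis
  proof (rule eq_matI)
    fix i j assume "i < dim_row ?R" and "j < dim_col ?R"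
    then have "i < N" "j < N"
      by (simp_all add: mat_unit_dim)
    with assms(1,2) show "?L $$ (i, j) = ?R $$ (i, j)"
      by (cases "i = p"; cases "i = q"; cases "j = p"; cases "j = q")
        (simp_all add: outer_prod_def cnj sq mat_unit_dim)
  qed (simp_all add: outer_prod_def mat_unit_dim)
qed

lemma assoc_mult_mat_middle:
  assumes "A \<in> carrier_mat N N" "B \<in> carrier_mat N N" "C \<in> carrier_mat N N"
    "D \<in> carrier_mat N N" "E \<in> carrier_mat N N"
  shows "A * B * C * D * E * F = A * (B * C * D * E) * F"
proof -
  have "A * B * C * D * E = A * (B * C) * D * E"
    by (simp only: assoc_mult_mat[OF assms(1-3)])
  also have "\<dots> = A * (B * C * D) * E"
    by (simp only: assoc_mult_mat[OF assms(1) mult_carrier_mat[OF assms(2,3)] assms(4)])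
  also have "\<dots> = A * (B * C * D * E)"
    by (simp only: assoc_mult_mat[OF assms(1) mult_carrier_mat[OF mult_carrier_mat[OF assms(2,3)] assms(4)] assms(5)])
  finally show ?thesis
    by simp
qed

lemma unitary_conj_mult:
  assumes "unitary N G" and "A \<in> carrier_mat N N" and "B \<in> carrier_mat N N"
  shows "(dagger G * A * G) * (dagger G * B * G) = dagger G * (A * B) * G"
proof -
  note G = unitaryD[OF assms(1)]
  have cancel: "G * (dagger G * X) = X" if "X \<in> carrier_mat N N" for X
    using assoc_mult_mat[OF G(1) G(2) that] G(4) that by simp
  have "(dagger G * A * G) * (dagger G * B * G) = dagger G * A * (G * (dagger G * B * G))"
    using G assms by (intro assoc_mult_mat[of _ N N _ N _ N]) auto
  also have "G * (dagger G * B * G) = B * G"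
    using G assms by (simp add: cancel)
  also have "dagger G * A * (B * G) = dagger G * (A * B) * G"
    using G assms by (simp only: assoc_mult_mat[OF G(2) assms(2) mult_carrier_mat[OF assms(3) G(1)]]
        assoc_mult_mat[OF G(2) mult_carrier_mat[OF assms(2,3)] G(1)] assoc_mult_mat[OF assms(2,3) G(1)])
  finally show ?thesis .
qed

lemma unitary_conj_affine:
  assumes "unitary N G" and "A \<in> carrier_mat N N" and "B \<in> carrier_mat N N"
  shows "dagger G * (1\<^sub>m N + a \<cdot>\<^sub>m A + b \<cdot>\<^sub>m B) * G
    = 1\<^sub>m N + a \<cdot>\<^sub>m (dagger G * A * G) + b \<cdot>\<^sub>m (dagger G * B * G)"
proof -
  note G = unitaryD[OF assms(1)]
  have add: "dagger G * (X + Y) * G = dagger G * X * G + dagger G * Y * G"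
    if "X \<in> carrier_mat N N" "Y \<in> carrier_mat N N" for X Y
    using add_mult_distrib_mat[OF mult_carrier_mat[OF G(2) that(1)] mult_carrier_mat[OF G(2) that(2)] G(1)]
    by (simp add: mult_add_distrib_mat[OF G(2) that])
  have smult: "dagger G * (c \<cdot>\<^sub>m X) * G = c \<cdot>\<^sub>m (dagger G * X * G)" if "X \<in> carrier_mat N N" for c X
    by (simp add: mult_smult_distrib[OF G(2) that] mult_smult_assoc_mat[OF mult_carrier_mat[OF G(2) that] G(1)])
  have one: "dagger G * 1\<^sub>m N * G = 1\<^sub>m N"
    using G by simp
  show ?thesis
    using assms(2,3) by (simp only: add smult one add_carrier_mat smult_carrier_mat one_carrier_mat)
qed

section \<open>Exponentials of orthogonal idempotents\<close>

lemma orthogonal_idempotents_mult: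
  fixes P Q :: "'a :: comm_semiring_1 mat"
  assumes P: "P \<in> carrier_mat N N" and Q: "Q \<in> carrier_mat N N"
    and PP: "P * P = P" and QQ: "Q * Q = Q" and PQ: "P * Q = 0\<^sub>m N N" and QP: "Q * P = 0\<^sub>m N N"
  shows "(a \<cdot>\<^sub>m P + b \<cdot>\<^sub>m Q) * (c \<cdot>\<^sub>m P + d \<cdot>\<^sub>m Q) = (a * c) \<cdot>\<^sub>m P + (b * d) \<cdot>\<^sub>m Q"
    (is "?L = ?R")
proof (rule eq_matI)
  fix i j assume "i < dim_row ?R" and "j < dim_col ?R"
  then have i: "i < N" and j: "j < N"
    using Q by auto
  have entry: "(X * Y) $$ (i, j) = (\<Sum>l<N. X $$ (i, l) * Y $$ (l, j))"
    if "X \<in> carrier_mat N N" and "Y \<in> carrier_mat N N" for X Y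
    by (rule index_mult_mat_sum[OF that i j])
  have sums_carrier: "a \<cdot>\<^sub>m P + b \<cdot>\<^sub>m Q \<in> carrier_mat N N" "c \<cdot>\<^sub>m P + d \<cdot>\<^sub>m Q \<in> carrier_mat N N"
    using P Q by simp_all
  have "?L $$ (i, j) = (\<Sum>l<N. (a * P $$ (i, l) + b * Q $$ (i, l)) * (c * P $$ (l, j) + d * Q $$ (l, j)))"
    unfolding entry[OF sums_carrier] using P Q i j by (intro sum.cong) auto
  also have "\<dots> = a * c * (\<Sum>l<N. P $$ (i, l) * P $$ (l, j)) + a * d * (\<Sum>l<N. P $$ (i, l) * Q $$ (l, j))
      + b * c * (\<Sum>l<N. Q $$ (i, l) * P $$ (l, j)) + b * d * (\<Sum>l<N. Q $$ (i, l) * Q $$ (l, j))"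
    by (simp add: algebra_simps sum.distrib sum_distrib_left)
  also have "\<dots> = a * c * (P * P) $$ (i, j) + a * d * (P * Q) $$ (i, j)
      + b * c * (Q * P) $$ (i, j) + b * d * (Q * Q) $$ (i, j)"
    using P Q by (simp add: entry)
  also have "\<dots> = ?R $$ (i, j)"
    using P Q i j by (simp add: PP QQ PQ QP)
  finally show "?L $$ (i, j) = ?R $$ (i, j)" .
qed (use P Q in auto)

lemma orthogonal_idempotents_power:
  fixes P Q :: "'a :: comm_semiring_1 mat"
  assumes P: "P \<in> carrier_mat N N" and Q: "Q \<in> carrier_mat N N"
    and PP: "P * P = P" and QQ: "Q * Q = Q" and PQ: "P * Q = 0\<^sub>m N N" and QP: "Q * P = 0\<^sub>m N N"
  shows "(a \<cdot>\<^sub>m P + b \<cdot>\<^sub>m Q) ^\<^sub>m Suc k = a ^ Suc k \<cdot>\<^sub>m P + b ^ Suc k \<cdot>\<^sub>m Q"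
proof (induction k)
  case 0
  show ?case
    using P Q by simp
next
  case (Suc k)
  then show ?case
    by (simp only: pow_mat.simps(2) orthogonal_idempotents_mult[OF assms] power_Suc2)
qed

lemma exp_sums: "(\<lambda>k. z ^ k / of_nat (fact k)) sums exp (z :: complex)"
  using exp_converges[of z] by (simp add: scaleR_conv_of_real divide_inverse_commute)

lemma mexp_orthogonal_idempotents:
  fixes P Q :: "complex mat"
  assumes P: "P \<in> carrier_mat N N" and Q: "Q \<in> carrier_mat N N"
    and PP: "P * P = P" and QQ: "Q * Q = Q" and PQ: "P * Q = 0\<^sub>m N N" and QP: "Q * P = 0\<^sub>m N N"
  shows "mexp (a \<cdot>\<^sub>m P + b \<cdot>\<^sub>m Q) = 1\<^sub>m N + (exp a - 1) \<cdot>\<^sub>m P + (exp b - 1) \<cdot>\<^sub>m Q"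
    (is "_ = ?R")
proof (rule eq_matI)
  fix i j assume "i < dim_row ?R" and "j < dim_col ?R"
  then have i: "i < N" and j: "j < N"
    using Q by auto
  let ?\<delta> = "1\<^sub>m N $$ (i, j) - P $$ (i, j) - Q $$ (i, j) :: complex"
  let ?t = "\<lambda>k. (if k = 0 then ?\<delta> else 0)
    + a ^ k / of_nat (fact k) * P $$ (i, j) + b ^ k / of_nat (fact k) * Q $$ (i, j)"
  have "((a \<cdot>\<^sub>m P + b \<cdot>\<^sub>m Q) ^\<^sub>m k) $$ (i, j) / of_nat (fact k) = ?t k" for k
  proof (cases k)
    case (Suc m)
    then show ?thesis
      using P Q i j by (simp del: pow_mat.simps add: orthogonal_idempotents_power[OF assms] add_divide_distrib)
  qed (use P Q i j in simp)
  moreover have "?t sums (?\<delta> + exp a * P $$ (i, j) + exp b * Q $$ (i, j))"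
    by (intro sums_add sums_mult2 exp_sums) (rule sums_single[where f = "\<lambda>_. ?\<delta>"])
  ultimately have "(\<lambda>k. ((a \<cdot>\<^sub>m P + b \<cdot>\<^sub>m Q) ^\<^sub>m k) $$ (i, j) / of_nat (fact k))
      sums (?\<delta> + exp a * P $$ (i, j) + exp b * Q $$ (i, j))"
    by simp
  then show "mexp (a \<cdot>\<^sub>m P + b \<cdot>\<^sub>m Q) $$ (i, j) = ?R $$ (i, j)"
    using P Q i j by (simp add: mexp_def sums_iff algebra_simps)
qed (use P Q in \<open>simp_all add: mexp_def\<close>)

lemma mexp_conj_mat_unit_diff:
  assumes G: "unitary N G" and "r < N" and "s < N" and "r \<noteq> s"
  shows "mexp (c \<cdot>\<^sub>m (dagger G * mat_unit N r r * G - dagger G * mat_unit N s s * G))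
    = dagger G * (1\<^sub>m N + (exp c - 1) \<cdot>\<^sub>m mat_unit N r r + (exp (- c) - 1) \<cdot>\<^sub>m mat_unit N s s) * G"
proof -
  define P where "P = dagger G * mat_unit N r r * G"
  define Q where "Q = dagger G * mat_unit N s s * G"
  have carrier: "P \<in> carrier_mat N N" "Q \<in> carrier_mat N N"
    unfolding P_def Q_def using unitaryD[OF G] by (auto intro!: mult_carrier_mat mat_unit_carrier)
  have idempotents: "P * P = P" "Q * Q = Q" "P * Q = 0\<^sub>m N N" "Q * P = 0\<^sub>m N N"
    using assms unitaryD[OF G] unfolding P_def Q_def
    by (simp_all add: unitary_conj_mult[OF G] mat_unit_mult_mat_unit)
  have "c \<cdot>\<^sub>m (P - Q) = c \<cdot>\<^sub>m P + (- c) \<cdot>\<^sub>m Q"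
    using carrier by (intro eq_matI) (auto simp: algebra_simps)
  then have "mexp (c \<cdot>\<^sub>m (P - Q)) = 1\<^sub>m N + (exp c - 1) \<cdot>\<^sub>m P + (exp (- c) - 1) \<cdot>\<^sub>m Q"
    by (simp add: mexp_orthogonal_idempotents[OF carrier idempotents])
  then show ?thesis
    unfolding P_def Q_def by (simp add: unitary_conj_affine[OF G])
qed

section \<open>The circuit\<close>

lemma phase_gate_eq_mat_diag:
  "phase_gate n \<theta> = mat_diag (2 ^ n) (\<lambda>a. if a = basis_index n (\<lambda>_. 1) then exp (\<i> * of_real \<theta>) else 1)"
  by (rule eq_matI) (simp_all add: phase_gate_def mat_diag_def)

lemma mat_diag_conj_on_qubit_pauliX:
  assumes "i \<in> {1..n}"
  shows "mat_diag (2 ^ n) d * on_qubit n i pauliX * mat_diag (2 ^ n) e * on_qubit n i pauliX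
    = mat_diag (2 ^ n) (\<lambda>a. d a * e (flip_qbit n i a))" (is "_ = ?R")
proof (rule eq_matI)
  let ?DX = "mat_diag (2 ^ n) d * on_qubit n i pauliX"
  fix a b assume "a < dim_row ?R" and "b < dim_col ?R"
  then have a: "a < 2 ^ n" and b: "b < 2 ^ n"
    by (simp_all add: mat_diag_def)
  have DX: "?DX \<in> carrier_mat (2 ^ n) (2 ^ n)"
    by (rule mult_carrier_mat[OF mat_diag_dim on_qubit_carrier])
  have "(?DX * mat_diag (2 ^ n) e * on_qubit n i pauliX) $$ (a, b)
      = (?DX * mat_diag (2 ^ n) e) $$ (a, flip_qbit n i b)"
    using assms a b DX by (intro index_mult_on_qubit_pauliX) auto
  also have "\<dots> = ?DX $$ (a, flip_qbit n i b) * e (flip_qbit n i b)"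
    using a by (simp add: mat_diag_mult_right[OF DX] flip_qbit_less)
  also have "\<dots> = mat_diag (2 ^ n) d $$ (a, b) * e (flip_qbit n i b)"
    using assms a b by (simp add: index_mult_on_qubit_pauliX[OF mat_diag_dim] flip_qbit_less flip_qbit_flip_qbit)
  finally show "(?DX * mat_diag (2 ^ n) e * on_qubit n i pauliX) $$ (a, b) = ?R $$ (a, b)"
    using a b by (simp add: mat_diag_def)
qed (simp_all add: mat_diag_def)

lemma flip_first_qbit_all_ones:
  assumes "n \<ge> 1"
  shows "flip_qbit n 1 (basis_index n (\<lambda>_. 1)) = basis_index n (\<lambda>i. if i = 1 then 0 else 1)"
  using assms by (intro qbit_eqI[OF flip_qbit_less])
    (auto simp: qbit_flip_qbit qbit_basis_index basis_index_less)

lemma Hc_eq_conj_mat_unit_diff: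
  fixes u :: "nat \<Rightarrow> int" and b b' :: "nat \<Rightarrow> nat"
  assumes u: "\<forall>i\<in>{1..n}. u i = 1 \<or> u i = -1" and G: "unitary (2 ^ n) G"
    and b: "\<forall>i\<in>{1..n}. b i < 2" and b': "\<forall>i\<in>{1..n}. b' i < 2"
    and Gp: "G *\<^sub>v ((complex_of_real (1 / sqrt 2)) \<cdot>\<^sub>v
               (ket n (\<lambda>i. nat ((1 + u i) div 2)) + ket n (\<lambda>i. nat ((1 - u i) div 2)))) = ket n b"
    and Gm: "G *\<^sub>v ((complex_of_real (1 / sqrt 2)) \<cdot>\<^sub>v
               (ket n (\<lambda>i. nat ((1 + u i) div 2)) - ket n (\<lambda>i. nat ((1 - u i) div 2)))) = ket n b'"
  shows "Hc n u = dagger G * mat_unit (2 ^ n) (basis_index n b) (basis_index n b) * G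
    - dagger G * mat_unit (2 ^ n) (basis_index n b') (basis_index n b') * G"
proof -
  define p where "p = basis_index n (\<lambda>i. nat ((1 + u i) div 2))"
  define q where "q = basis_index n (\<lambda>i. nat ((1 - u i) div 2))"
  define c where "c = complex_of_real (1 / sqrt 2)"
  have "\<forall>i\<in>{1..n}. nat ((1 + u i) div 2) < 2" "\<forall>i\<in>{1..n}. nat ((1 - u i) div 2) < 2"
    using u by auto
  then have pq: "p < 2 ^ n" "q < 2 ^ n"
    unfolding p_def q_def by (simp_all add: basis_index_less)
  let ?xp = "c \<cdot>\<^sub>v (unit_vec (2 ^ n) p + unit_vec (2 ^ n) q)"
  let ?xm = "c \<cdot>\<^sub>v (unit_vec (2 ^ n) p - unit_vec (2 ^ n) q)"
  have "dagger G * mat_unit (2 ^ n) (basis_index n b) (basis_index n b) * G = outer_prod ?xp ?xp"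
    using Gp b by (intro unitary_conj_mat_unit[OF G])
      (simp_all add: ket_def p_def q_def c_def basis_index_less)
  moreover have "dagger G * mat_unit (2 ^ n) (basis_index n b') (basis_index n b') * G = outer_prod ?xm ?xm"
    using Gm b' by (intro unitary_conj_mat_unit[OF G])
      (simp_all add: ket_def p_def q_def c_def basis_index_less)
  ultimately show ?thesis
    using Hc_eq_mat_unit[OF u] outer_prod_plus_minus[OF pq] by (simp add: p_def q_def c_def)
qed

lemma phase_gate_pauliX_product:
  assumes "n \<ge> 1"
  defines "r \<equiv> basis_index n (\<lambda>i. if i = 1 then 0 else 1)" and "s \<equiv> basis_index n (\<lambda>_. 1)"
  shows "phase_gate n \<theta> * on_qubit n 1 pauliX * phase_gate n (- \<theta>) * on_qubit n 1 pauliX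
    = 1\<^sub>m (2 ^ n) + (exp (- \<i> * of_real \<theta>) - 1) \<cdot>\<^sub>m mat_unit (2 ^ n) r r
      + (exp (\<i> * of_real \<theta>) - 1) \<cdot>\<^sub>m mat_unit (2 ^ n) s s"
proof -
  have first: "1 \<in> {1..n}"
    using assms(1) by simp
  have s: "s < 2 ^ n"
    unfolding s_def by (simp add: basis_index_less)
  have r: "r = flip_qbit n 1 s"
    unfolding r_def s_def by (rule flip_first_qbit_all_ones[OF assms(1), symmetric])
  have "r \<noteq> s"
    unfolding r by (rule flip_qbit_neq[OF first])
  moreover have "flip_qbit n 1 a = s \<longleftrightarrow> a = r" if "a < 2 ^ n" for a
    using flip_qbit_flip_qbit[OF first that] flip_qbit_flip_qbit[OF first s] r by auto
  ultimately show ?thesis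
    unfolding phase_gate_eq_mat_diag mat_diag_conj_on_qubit_pauliX[OF first] s_def[symmetric]
    using s by (intro eq_matI) (auto simp: mat_diag_def mat_unit_dim)
qed

theorem lemma2:
  fixes n :: nat and u :: "nat \<Rightarrow> int" and G :: "complex mat" and \<beta> :: real
  assumes n: "n \<ge> 1"
    and u: "\<forall>i\<in>{1..n}. u i = 1 \<or> u i = -1"
    and G: "unitary (2 ^ n) G"
    and Gp: "G *\<^sub>v ((complex_of_real (1 / sqrt 2)) \<cdot>\<^sub>v
               (ket n (\<lambda>i. nat ((1 + u i) div 2)) + ket n (\<lambda>i. nat ((1 - u i) div 2))))
             = ket n (\<lambda>i. if i = 1 then 0 else 1)"
    and Gm: "G *\<^sub>v ((complex_of_real (1 / sqrt 2)) \<cdot>\<^sub>v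
               (ket n (\<lambda>i. nat ((1 + u i) div 2)) - ket n (\<lambda>i. nat ((1 - u i) div 2))))
             = ket n (\<lambda>i. 1)"
  shows "mexp ((- \<i> * of_real \<beta>) \<cdot>\<^sub>m Hc n u)
         = dagger G * phase_gate n \<beta> * on_qubit n 1 pauliX * phase_gate n (- \<beta>)
             * on_qubit n 1 pauliX * G"
proof -
  define r where "r = basis_index n (\<lambda>i. if i = 1 then 0 else 1 :: nat)"
  define s where "s = basis_index n (\<lambda>_. 1 :: nat)"
  have "qbit n r 1 = 0" "qbit n s 1 = 1"
    using n unfolding r_def s_def by (simp_all add: qbit_basis_index)
  then have rs: "r < 2 ^ n" "s < 2 ^ n" "r \<noteq> s"
    unfolding r_def s_def by (auto simp: basis_index_less)
  have "Hc n u = dagger G * mat_unit (2 ^ n) r r * G - dagger G * mat_unit (2 ^ n) s s * G"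
    unfolding r_def s_def by (rule Hc_eq_conj_mat_unit_diff[OF u G _ _ Gp Gm]) simp_all
  then have "mexp ((- \<i> * of_real \<beta>) \<cdot>\<^sub>m Hc n u) = dagger G * (1\<^sub>m (2 ^ n)
      + (exp (- \<i> * of_real \<beta>) - 1) \<cdot>\<^sub>m mat_unit (2 ^ n) r r
      + (exp (\<i> * of_real \<beta>) - 1) \<cdot>\<^sub>m mat_unit (2 ^ n) s s) * G"
    by (simp add: mexp_conj_mat_unit_diff[OF G rs])
  also have "\<dots> = dagger G
      * (phase_gate n \<beta> * on_qubit n 1 pauliX * phase_gate n (- \<beta>) * on_qubit n 1 pauliX) * G"
    unfolding r_def s_def phase_gate_pauliX_product[OF n] ..
  also have "\<dots> = dagger G * phase_gate n \<beta> * on_qubit n 1 pauliX * phase_gate n (- \<beta>)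
      * on_qubit n 1 pauliX * G"
    by (rule assoc_mult_mat_middle[OF unitaryD(2)[OF G], symmetric]) (simp_all add: phase_gate_eq_mat_diag)
  finally show ?thesis .
qed

end
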